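(* Let $(X_1,Y_1),\ldots,(X_m,Y_m)$ be a sequence of independent pairs of Bernoulli random variables (the pairs are mutually independent; $X_i$ and $Y_i$ within a pair may be dependent) such that $\mathbb{E}[X_i]=p_i$, $\mathbb{E}[Y_i]=q_i$ and $\mathbb{E}[X_iY_i]=0$ (i.e., $X_i$ and $Y_i$ are never both $1$). Let $\mu_x=\sum_i p_i$, $\mu_y=\sum_i q_i$, $X=\sum_i X_i$, $Y=\sum_i Y_i$. If $\mu_x+\mu_y>1$, then $$\frac{\mu_x-1}{\mu_x+\mu_y-1}\le\mathbb{E}\Big[\frac{X}{X+Y}\Big]\le\frac{\mu_x}{\mu_x+\mu_y-1}.$$
   Context: Convention: in the expression $\frac{X}{X+Y}$, the value $0/0$ is interpreted as $1$ for the left inequality and as $0$ for the right inequality. *)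

theory Defs
  imports "HOL-Probability.Probability"
begin

(* Ratio X/(X+Y) with the convention 0/0 = 1 (used for the lower bound). *)
definition ratio_lo :: "real \<Rightarrow> real \<Rightarrow> real" where
  "ratio_lo x y = (if x + y = 0 then 1 else x / (x + y))"

(* Ratio X/(X+Y) with the convention 0/0 = 0 (used for the upper bound). *)
definition ratio_hi :: "real \<Rightarrow> real \<Rightarrow> real" where
  "ratio_hi x y = (if x + y = 0 then 0 else x / (x + y))"

end

theory Submission
  imports Defs
begin

text \<open>
  Put \<open>Z\<^sub>i = X\<^sub>i + Y\<^sub>i\<close>, again a Bernoulli variable, and \<open>D = \<Sum>\<^sub>i Z\<^sub>i = X + Y\<close>.
  Since \<open>X\<^sub>i = 1\<close> forces \<open>Z\<^sub>i = 1\<close>, we have \<open>X\<^sub>i / D = X\<^sub>i / (1 + D\<^sub>i)\<close> with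
  \<open>D\<^sub>i = D - Z\<^sub>i\<close> independent of \<open>X\<^sub>i\<close>, hence \<open>E[X/D] = \<Sum>\<^sub>i p\<^sub>i E[1/(1 + D\<^sub>i)]\<close>, and
  likewise for \<open>Y\<close>. The same identity applied to the \<open>Z\<^sub>j\<close> of any subfamily with sum \<open>S\<close>,
  together with \<open>1/(1 + S) \<le> 1/(1 + S - Z\<^sub>j)\<close>, gives
  \<open>(\<Sum>\<^sub>j E Z\<^sub>j) E[1/(1 + S)] \<le> \<Sum>\<^sub>j E[Z\<^sub>j/S] \<le> 1\<close>. For \<open>S = D\<^sub>i\<close> the expectations sum
  to at least \<open>\<mu>\<^sub>x + \<mu>\<^sub>y - 1\<close>, which yields the upper bound; the lower bound is
  \<open>1 - E[Y/D]\<close> under the convention \<open>0/0 = 1\<close>.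
\<close>

lemma (in prob_space) integrable_bernoulli:
  fixes X :: "'a \<Rightarrow> real"
  assumes "X \<in> borel_measurable M" and "AE \<omega> in M. X \<omega> \<in> {0, 1}"
  shows "integrable M X"
  using assms by (intro integrable_const_bound[where B=1]) (auto elim!: eventually_mono)

lemma (in prob_space) integral_indep_component_mult_sum:
  fixes g s :: "'b \<Rightarrow> real" and h :: "real \<Rightarrow> real"
  assumes V: "indep_vars (\<lambda>_. N) V I" and j: "j \<in> I" and K: "K \<subseteq> I" "j \<notin> K"
    and [measurable]: "g \<in> borel_measurable N" "s \<in> borel_measurable N" "h \<in> borel_measurable borel"
    and "integrable M (\<lambda>\<omega>. g (V j \<omega>))" "integrable M (\<lambda>\<omega>. h (\<Sum>k\<in>K. s (V k \<omega>)))"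
  shows "expectation (\<lambda>\<omega>. g (V j \<omega>) * h (\<Sum>k\<in>K. s (V k \<omega>)))
       = expectation (\<lambda>\<omega>. g (V j \<omega>)) * expectation (\<lambda>\<omega>. h (\<Sum>k\<in>K. s (V k \<omega>)))"
proof -
  have "indep_var (Pi\<^sub>M {j} (\<lambda>_. N)) (\<lambda>\<omega>. restrict (\<lambda>i. V i \<omega>) {j})
                  (Pi\<^sub>M K (\<lambda>_. N)) (\<lambda>\<omega>. restrict (\<lambda>i. V i \<omega>) K)"
    using K j by (intro indep_var_restrict[OF V]) auto
  then have "indep_var borel ((\<lambda>v. g (v j)) \<circ> (\<lambda>\<omega>. restrict (\<lambda>i. V i \<omega>) {j}))
                       borel ((\<lambda>v. h (\<Sum>k\<in>K. s (v k))) \<circ> (\<lambda>\<omega>. restrict (\<lambda>i. V i \<omega>) K))"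
    by (rule indep_var_compose) measurable
  moreover have "((\<lambda>v. h (\<Sum>k\<in>K. s (v k))) \<circ> (\<lambda>\<omega>. restrict (\<lambda>i. V i \<omega>) K))
      = (\<lambda>\<omega>. h (\<Sum>k\<in>K. s (V k \<omega>)))"
    by (auto intro!: sum.cong arg_cong[where f=h])
  ultimately show ?thesis
    using assms(8,9) by (auto simp: comp_def intro: indep_var_lebesgue_integral)
qed

locale indep_bernoulli = prob_space +
  fixes N :: "'b measure" and V :: "'i \<Rightarrow> 'a \<Rightarrow> 'b" and I :: "'i set" and s :: "'b \<Rightarrow> real"
  assumes indep: "indep_vars (\<lambda>_. N) V I" and finite_I: "finite I"
    and s_measurable [measurable]: "s \<in> borel_measurable N"
    and bernoulli: "AE \<omega> in M. \<forall>i\<in>I. s (V i \<omega>) \<in> {0, 1}"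
begin

definition S :: "'i set \<Rightarrow> 'a \<Rightarrow> real" where
  "S K \<omega> = (\<Sum>k\<in>K. s (V k \<omega>))"

lemma V_measurable [measurable]: "i \<in> I \<Longrightarrow> V i \<in> M \<rightarrow>\<^sub>M N"
  using indep by (auto simp: indep_vars_def)

lemma S_measurable [measurable]: "K \<subseteq> I \<Longrightarrow> S K \<in> borel_measurable M"
  unfolding S_def by (intro borel_measurable_sum) auto

lemma S_remove: "j \<in> K \<Longrightarrow> K \<subseteq> I \<Longrightarrow> S K \<omega> = s (V j \<omega>) + S (K - {j}) \<omega>"
  unfolding S_def using finite_I by (intro sum.remove) (auto intro: finite_subset)

lemma AE_S_nonneg: "AE \<omega> in M. \<forall>K\<subseteq>I. 0 \<le> S K \<omega>"
  using bernoulli by eventually_elim (force simp: S_def intro!: sum_nonneg)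

lemma integrable_s: "i \<in> I \<Longrightarrow> integrable M (\<lambda>\<omega>. s (V i \<omega>))"
  using bernoulli by (intro integrable_bernoulli) (auto elim!: eventually_mono)

lemma integrable_inverse_one_plus_S: "K \<subseteq> I \<Longrightarrow> integrable M (\<lambda>\<omega>. 1 / (1 + S K \<omega>))"
  by (rule integrable_const_bound[where B=1], rule eventually_mono[OF AE_S_nonneg]) auto

lemma expectation_weight_div_S:
  fixes g :: "'b \<Rightarrow> real"
  assumes [measurable]: "g \<in> borel_measurable N"
    and weight: "AE \<omega> in M. \<forall>i\<in>I. 0 \<le> g (V i \<omega>) \<and> g (V i \<omega>) \<le> s (V i \<omega>)"
    and K: "K \<subseteq> I" and j: "j \<in> K"
  shows "integrable M (\<lambda>\<omega>. g (V j \<omega>) / S K \<omega>)"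
    and "expectation (\<lambda>\<omega>. g (V j \<omega>) / S K \<omega>)
       = expectation (\<lambda>\<omega>. g (V j \<omega>)) * expectation (\<lambda>\<omega>. 1 / (1 + S (K - {j}) \<omega>))"
proof -
  have jI: "j \<in> I" and Kj: "K - {j} \<subseteq> I" using K j by auto
  have bounds: "AE \<omega> in M. s (V j \<omega>) \<in> {0, 1} \<and> 0 \<le> g (V j \<omega>) \<and> g (V j \<omega>) \<le> s (V j \<omega>)
      \<and> 0 \<le> S (K - {j}) \<omega>"
    using bernoulli weight AE_S_nonneg by eventually_elim (use K jI in blast)
  \<comment> \<open>either the weight vanishes or the \<open>j\<close>-th indicator is \<open>1\<close>\<close>
  have ae: "AE \<omega> in M. g (V j \<omega>) / S K \<omega> = g (V j \<omega>) * (1 / (1 + S (K - {j}) \<omega>))"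
    using bounds by eventually_elim (auto simp: S_remove[OF j K])
  have g_int: "integrable M (\<lambda>\<omega>. g (V j \<omega>))"
    by (rule integrable_const_bound[where B=1], rule eventually_mono[OF bounds])
      (use jI in \<open>auto, measurable\<close>)
  have prod_int: "integrable M (\<lambda>\<omega>. g (V j \<omega>) * (1 / (1 + S (K - {j}) \<omega>)))"
    by (rule integrable_const_bound[where B=1], rule eventually_mono[OF bounds])
      (use jI Kj in \<open>auto simp: abs_mult mult_le_one, measurable\<close>)
  show "integrable M (\<lambda>\<omega>. g (V j \<omega>) / S K \<omega>)"
    using prod_int by (subst integrable_cong_AE[OF _ _ ae]) (use jI K Kj in measurable)
  have "expectation (\<lambda>\<omega>. g (V j \<omega>) / S K \<omega>)
      = expectation (\<lambda>\<omega>. g (V j \<omega>) * (1 / (1 + S (K - {j}) \<omega>)))"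
    by (rule integral_cong_AE[OF _ _ ae]) (use jI K Kj in measurable)
  also have "\<dots> = expectation (\<lambda>\<omega>. g (V j \<omega>)) * expectation (\<lambda>\<omega>. 1 / (1 + S (K - {j}) \<omega>))"
    using integral_indep_component_mult_sum[OF indep jI, of "K - {j}" g s "\<lambda>x. 1 / (1 + x)"]
      g_int integrable_inverse_one_plus_S[OF Kj] Kj by (simp add: S_def)
  finally show "expectation (\<lambda>\<omega>. g (V j \<omega>) / S K \<omega>)
       = expectation (\<lambda>\<omega>. g (V j \<omega>)) * expectation (\<lambda>\<omega>. 1 / (1 + S (K - {j}) \<omega>))" .
qed

lemma sum_expectation_mult_expectation_inverse_le:
  assumes K: "K \<subseteq> I"
  shows "(\<Sum>k\<in>K. expectation (\<lambda>\<omega>. s (V k \<omega>))) * expectation (\<lambda>\<omega>. 1 / (1 + S K \<omega>)) \<le> 1"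
proof -
  have "AE \<omega> in M. \<forall>i\<in>I. 0 \<le> s (V i \<omega>) \<and> s (V i \<omega>) \<le> s (V i \<omega>)"
    using bernoulli by eventually_elim auto
  note ratio = expectation_weight_div_S[OF s_measurable this K]
  have term_le: "expectation (\<lambda>\<omega>. s (V k \<omega>)) * expectation (\<lambda>\<omega>. 1 / (1 + S K \<omega>))
      \<le> expectation (\<lambda>\<omega>. s (V k \<omega>) / S K \<omega>)" if k: "k \<in> K" for k
  proof -
    have kI: "k \<in> I" and Kk: "K - {k} \<subseteq> I" using K k by auto
    have "AE \<omega> in M. 0 \<le> s (V k \<omega>) \<and> 1 / (1 + S K \<omega>) \<le> 1 / (1 + S (K - {k}) \<omega>)"
      using bernoulli AE_S_nonneg
    proof eventually_elim
      case (elim \<omega>)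
      then have "0 \<le> s (V k \<omega>)" "0 \<le> S (K - {k}) \<omega>" using kI Kk by auto
      then show ?case by (simp add: S_remove[OF k K] divide_left_mono)
    qed
    then have "expectation (\<lambda>\<omega>. 1 / (1 + S K \<omega>)) \<le> expectation (\<lambda>\<omega>. 1 / (1 + S (K - {k}) \<omega>))"
      and "0 \<le> expectation (\<lambda>\<omega>. s (V k \<omega>))"
      using K Kk by (auto intro!: integral_mono_AE integral_nonneg_AE integrable_inverse_one_plus_S
          elim: eventually_mono)
    then show ?thesis
      unfolding ratio(2)[OF k] by (rule mult_left_mono)
  qed
  have "(\<Sum>k\<in>K. expectation (\<lambda>\<omega>. s (V k \<omega>))) * expectation (\<lambda>\<omega>. 1 / (1 + S K \<omega>))
      \<le> (\<Sum>k\<in>K. expectation (\<lambda>\<omega>. s (V k \<omega>) / S K \<omega>))"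
    unfolding sum_distrib_right by (intro sum_mono term_le)
  also have "\<dots> = expectation (\<lambda>\<omega>. \<Sum>k\<in>K. s (V k \<omega>) / S K \<omega>)"
    by (rule Bochner_Integration.integral_sum[symmetric]) (rule ratio(1))
  also have "\<dots> = expectation (\<lambda>\<omega>. S K \<omega> / S K \<omega>)"
    unfolding S_def by (simp only: sum_divide_distrib[symmetric])
  also have "\<dots> \<le> expectation (\<lambda>\<omega>. 1)"
    using K by (intro integral_mono integrable_const_bound[where B=1]) (auto simp: divide_le_eq_1)
  finally show ?thesis by (simp add: prob_space)
qed

lemma expectation_inverse_one_plus_S_remove_le:
  assumes j: "j \<in> I" and mu: "1 < (\<Sum>i\<in>I. expectation (\<lambda>\<omega>. s (V i \<omega>)))"
  shows "expectation (\<lambda>\<omega>. 1 / (1 + S (I - {j}) \<omega>))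
      \<le> 1 / ((\<Sum>i\<in>I. expectation (\<lambda>\<omega>. s (V i \<omega>))) - 1)"
proof -
  define \<mu> where "\<mu> = (\<Sum>i\<in>I. expectation (\<lambda>\<omega>. s (V i \<omega>)))"
  define \<nu> where "\<nu> = (\<Sum>i\<in>I - {j}. expectation (\<lambda>\<omega>. s (V i \<omega>)))"
  have "\<nu> * expectation (\<lambda>\<omega>. 1 / (1 + S (I - {j}) \<omega>)) \<le> 1"
    unfolding \<nu>_def by (intro sum_expectation_mult_expectation_inverse_le) auto
  moreover have "expectation (\<lambda>\<omega>. s (V j \<omega>)) \<le> expectation (\<lambda>\<omega>. 1)"
    using bernoulli j by (intro integral_mono_AE integrable_s) (auto elim!: eventually_mono)
  then have "\<mu> - 1 \<le> \<nu>"
    unfolding \<mu>_def \<nu>_def using sum.remove[OF finite_I j, of "\<lambda>i. expectation (\<lambda>\<omega>. s (V i \<omega>))"] prob_space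
    by simp
  moreover have "0 < \<mu> - 1" using mu unfolding \<mu>_def by simp
  ultimately have "expectation (\<lambda>\<omega>. 1 / (1 + S (I - {j}) \<omega>)) \<le> 1 / \<nu>"
    by (simp add: pos_le_divide_eq mult.commute)
  also have "\<dots> \<le> 1 / (\<mu> - 1)"
    using \<open>\<mu> - 1 \<le> \<nu>\<close> \<open>0 < \<mu> - 1\<close> by (intro divide_left_mono) auto
  finally show ?thesis unfolding \<mu>_def .
qed

lemma expectation_weighted_ratio_le:
  fixes g :: "'b \<Rightarrow> real"
  assumes [measurable]: "g \<in> borel_measurable N"
    and weight: "AE \<omega> in M. \<forall>i\<in>I. 0 \<le> g (V i \<omega>) \<and> g (V i \<omega>) \<le> s (V i \<omega>)"
    and mu: "1 < (\<Sum>i\<in>I. expectation (\<lambda>\<omega>. s (V i \<omega>)))"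
  shows "integrable M (\<lambda>\<omega>. (\<Sum>i\<in>I. g (V i \<omega>)) / S I \<omega>)"
    and "expectation (\<lambda>\<omega>. (\<Sum>i\<in>I. g (V i \<omega>)) / S I \<omega>)
      \<le> (\<Sum>i\<in>I. expectation (\<lambda>\<omega>. g (V i \<omega>))) / ((\<Sum>i\<in>I. expectation (\<lambda>\<omega>. s (V i \<omega>))) - 1)"
proof -
  note weight_div = expectation_weight_div_S[OF assms(1) weight subset_refl]
  have split: "(\<lambda>\<omega>. (\<Sum>i\<in>I. g (V i \<omega>)) / S I \<omega>) = (\<lambda>\<omega>. \<Sum>i\<in>I. g (V i \<omega>) / S I \<omega>)"
    by (simp add: sum_divide_distrib)
  show "integrable M (\<lambda>\<omega>. (\<Sum>i\<in>I. g (V i \<omega>)) / S I \<omega>)"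
    unfolding split by (intro Bochner_Integration.integrable_sum weight_div(1))
  have "expectation (\<lambda>\<omega>. (\<Sum>i\<in>I. g (V i \<omega>)) / S I \<omega>)
      = (\<Sum>i\<in>I. expectation (\<lambda>\<omega>. g (V i \<omega>)) * expectation (\<lambda>\<omega>. 1 / (1 + S (I - {i}) \<omega>)))"
    unfolding split by (simp add: Bochner_Integration.integral_sum weight_div)
  also have "\<dots> \<le> (\<Sum>i\<in>I. expectation (\<lambda>\<omega>. g (V i \<omega>))
      * (1 / ((\<Sum>i\<in>I. expectation (\<lambda>\<omega>. s (V i \<omega>))) - 1)))"
    using weight by (intro sum_mono mult_left_mono expectation_inverse_one_plus_S_remove_le mu
        integral_nonneg_AE) (auto elim!: eventually_mono)
  finally show "expectation (\<lambda>\<omega>. (\<Sum>i\<in>I. g (V i \<omega>)) / S I \<omega>)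
      \<le> (\<Sum>i\<in>I. expectation (\<lambda>\<omega>. g (V i \<omega>))) / ((\<Sum>i\<in>I. expectation (\<lambda>\<omega>. s (V i \<omega>))) - 1)"
    by (simp add: sum_divide_distrib)
qed

end

lemma (in prob_space) AE_add_bernoulli_if_expectation_mult_zero:
  fixes X Y :: "'a \<Rightarrow> real"
  assumes [measurable]: "X \<in> borel_measurable M" "Y \<in> borel_measurable M"
    and X: "AE \<omega> in M. X \<omega> \<in> {0, 1}" and Y: "AE \<omega> in M. Y \<omega> \<in> {0, 1}"
    and XY: "expectation (\<lambda>\<omega>. X \<omega> * Y \<omega>) = 0"
  shows "AE \<omega> in M. X \<omega> + Y \<omega> \<in> {0, 1}"
proof -
  have XY_bernoulli: "AE \<omega> in M. X \<omega> * Y \<omega> \<in> {0, 1}"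
    using X Y by eventually_elim auto
  have "integrable M (\<lambda>\<omega>. X \<omega> * Y \<omega>)"
    using XY_bernoulli by (intro integrable_bernoulli) auto
  moreover have "AE \<omega> in M. 0 \<le> X \<omega> * Y \<omega>"
    using XY_bernoulli by eventually_elim auto
  ultimately have "AE \<omega> in M. X \<omega> * Y \<omega> = 0"
    using XY integral_nonneg_eq_0_iff_AE by blast
  then show ?thesis
    using X Y by eventually_elim auto
qed

lemma ratio_hi_eq: "ratio_hi x y = x / (x + y)"
  unfolding ratio_hi_def by simp

lemma ratio_lo_eq: "ratio_lo x y = 1 - y / (x + y)"
  unfolding ratio_lo_def by (cases "x + y = 0") (auto simp: field_simps)

theorem theorem3:
  fixes M :: "'a measure" and X Y :: "nat \<Rightarrow> 'a \<Rightarrow> real" and m :: nat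
  assumes "prob_space M"
    and "prob_space.indep_vars M (\<lambda>i. borel \<Otimes>\<^sub>M borel) (\<lambda>i \<omega>. (X i \<omega>, Y i \<omega>)) {..<m}"
    and "\<And>i. i < m \<Longrightarrow> AE \<omega> in M. X i \<omega> \<in> {0, 1}"
    and "\<And>i. i < m \<Longrightarrow> AE \<omega> in M. Y i \<omega> \<in> {0, 1}"
    and "\<And>i. i < m \<Longrightarrow> prob_space.expectation M (\<lambda>\<omega>. X i \<omega> * Y i \<omega>) = 0"
    and "(\<Sum>i<m. prob_space.expectation M (X i)) + (\<Sum>i<m. prob_space.expectation M (Y i)) > 1"
  shows "(((\<Sum>i<m. prob_space.expectation M (X i)) - 1) /
           ((\<Sum>i<m. prob_space.expectation M (X i)) + (\<Sum>i<m. prob_space.expectation M (Y i)) - 1)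
         \<le> prob_space.expectation M (\<lambda>\<omega>. ratio_lo (\<Sum>i<m. X i \<omega>) (\<Sum>i<m. Y i \<omega>))) \<and>
         (prob_space.expectation M (\<lambda>\<omega>. ratio_hi (\<Sum>i<m. X i \<omega>) (\<Sum>i<m. Y i \<omega>))
         \<le> (\<Sum>i<m. prob_space.expectation M (X i)) /
           ((\<Sum>i<m. prob_space.expectation M (X i)) + (\<Sum>i<m. prob_space.expectation M (Y i)) - 1))"
proof -
  interpret prob_space M by fact
  let ?\<mu>x = "\<Sum>i<m. expectation (X i)" and ?\<mu>y = "\<Sum>i<m. expectation (Y i)"
  have [measurable]: "X i \<in> borel_measurable M" "Y i \<in> borel_measurable M" if "i < m" for i
    using assms(2) that by (auto simp: indep_vars_def measurable_pair_iff comp_def)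
  have "integrable M (X i)" "integrable M (Y i)" if "i < m" for i
    using assms(3,4)[OF that] that by (auto intro: integrable_bernoulli)
  then have mu_eq: "(\<Sum>i<m. expectation (\<lambda>\<omega>. fst (X i \<omega>, Y i \<omega>) + snd (X i \<omega>, Y i \<omega>))) = ?\<mu>x + ?\<mu>y"
    by (simp add: sum.distrib)
  have bernoulli: "AE \<omega> in M. \<forall>i\<in>{..<m}. X i \<omega> + Y i \<omega> \<in> {0, 1}"
    using assms(3-5) by (intro AE_finite_allI AE_add_bernoulli_if_expectation_mult_zero) auto
  have nonneg: "AE \<omega> in M. \<forall>i\<in>{..<m}. 0 \<le> X i \<omega> \<and> 0 \<le> Y i \<omega>"
  proof (rule AE_finite_allI)
    fix i assume "i \<in> {..<m}"
    then have "i < m" by simp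
    from assms(3)[OF this] assms(4)[OF this] show "AE \<omega> in M. 0 \<le> X i \<omega> \<and> 0 \<le> Y i \<omega>"
      by eventually_elim auto
  qed simp
  interpret indep_bernoulli M "borel \<Otimes>\<^sub>M borel" "\<lambda>i \<omega>. (X i \<omega>, Y i \<omega>)" "{..<m}" "\<lambda>p. fst p + snd p"
    using assms(2) bernoulli by unfold_locales auto
  have "AE \<omega> in M. \<forall>i\<in>{..<m}. 0 \<le> f (X i \<omega>, Y i \<omega>)
      \<and> f (X i \<omega>, Y i \<omega>) \<le> fst (X i \<omega>, Y i \<omega>) + snd (X i \<omega>, Y i \<omega>)"
    if "f = fst \<or> f = snd" for f :: "real \<times> real \<Rightarrow> real"
    using nonneg by eventually_elim (use that in auto)
  note upper = expectation_weighted_ratio_le[of fst, OF _ this assms(6)[folded mu_eq], unfolded mu_eq]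
    and lower = expectation_weighted_ratio_le[of snd, OF _ this assms(6)[folded mu_eq], unfolded mu_eq]
  have S_eq: "S {..<m} \<omega> = (\<Sum>i<m. X i \<omega>) + (\<Sum>i<m. Y i \<omega>)" for \<omega>
    by (simp add: S_def sum.distrib)
  have "(?\<mu>x - 1) / (?\<mu>x + ?\<mu>y - 1) = 1 - ?\<mu>y / (?\<mu>x + ?\<mu>y - 1)"
    using assms(6) by (simp add: field_simps)
  also have "\<dots> \<le> expectation (\<lambda>\<omega>. ratio_lo (\<Sum>i<m. X i \<omega>) (\<Sum>i<m. Y i \<omega>))"
    using lower prob_space by (simp add: ratio_lo_eq S_eq)
  finally show ?thesis
    using upper by (simp add: ratio_hi_eq S_eq)
qed

end
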